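(* Let $(\lambda^*,\xi^* )$ be a maximizer of $L$, and let $(\lambda^{(1)},\xi^{(1)})$ be given by $\lambda^{(1)}=0$, $\xi^{(1)}_{ij}=\log\sum_{x_i,x_j}e^{-\eta C_{ij}(x_i,x_j)}$ for $ij\in\mathcal E$ and $\xi^{(1)}_i=\log\sum_xe^{-\eta C_i(x)}$ for $i\in\mathcal V$. Then $L(\lambda^*,\xi^* )-L(\lambda^{(1)},\xi^{(1)})\le\min\big(\|\eta C/d+\exp(-\eta C)\|_1,\,S\big)$, where $S=\sum_{ij\in\mathcal E}\Big[\log\sum_{x_i,x_j}e^{-\eta C_{ij}(x_i,x_j)}+\sum_{x_i,x_j}\frac{\eta}{d^2}C_{ij}(x_i,x_j)\Big]+\sum_{i\in\mathcal V}\Big[\log\sum_xe^{-\eta C_i(x)}+\sum_x\frac{\eta}{d}C_i(x)\Big]$.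
   Context: Let $G=(\mathcal V,\mathcal E)$ be a graph with $\mathcal V=\{1,\dots,n\}$, each vertex on at least one edge, edges written as ordered pairs $ij$, $N(i)$ the neighbours of $i$, $\chi=\{0,\dots,d-1\}$, $\eta>0$, and $C$ a cost vector with components $C_i\in\mathbb R^d$, $C_{ij}\in\mathbb R^{d\times d}$; $\exp$ is entrywise and $\|\cdot\|_1$ is the sum of absolute values of all entries. Dual variables $(\lambda,\xi)$: for each edge $ij$, $\lambda_{ij},\lambda_{ji}\in\mathbb R^d$ (associated with $i$ and $j$ respectively) and $\xi_{ij}\in\mathbb R$; for each vertex $\xi_i\in\mathbb R$. With $\Gamma_{ij}(x_i,x_j)=\exp(-\eta C_{ij}(x_i,x_j)-\lambda_{ij}(x_i)-\lambda_{ji}(x_j)-\xi_{ij})$ and $\Gamma_i(x)=\exp(-\eta C_i(x)-\xi_i+\sum_{j\in N(i)}\lambda_{ij}(x))$, the Lyapunov function is $L(\lambda,\xi)=-\sum_{ij}\sum_{x_i,x_j}\Gamma_{ij}(x_i,x_j)-\sum_i\sum_x\Gamma_i(x)-\sum_{ij}\xi_{ij}-\sum_i\xi_i+\sum_{ij}\sum_{x_i,x_j}e^{-\eta C_{ij}(x_i,x_j)}+\sum_i\sum_xe^{-\eta C_i(x)}$. *)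

theory Defs
  imports Complex_Main
begin

(* Vertices are {1..n}; edges E :: (nat \<times> nat) set of ordered pairs (i,j);
   states x range over {..<d}.
   Duals: lam i j x = lambda_ij(x)  (associated with vertex i on edge {i,j}),
          xe i j = xi_ij,  xv i = xi_i. *)

definition nbrs :: "(nat \<times> nat) set \<Rightarrow> nat \<Rightarrow> nat set" where
  "nbrs E i = {j. (i, j) \<in> E \<or> (j, i) \<in> E}"

definition Gamma_e ::
  "real \<Rightarrow> (nat \<Rightarrow> nat \<Rightarrow> nat \<Rightarrow> nat \<Rightarrow> real) \<Rightarrow> (nat \<Rightarrow> nat \<Rightarrow> nat \<Rightarrow> real)
   \<Rightarrow> (nat \<Rightarrow> nat \<Rightarrow> real) \<Rightarrow> nat \<Rightarrow> nat \<Rightarrow> nat \<Rightarrow> nat \<Rightarrow> real" where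
  "Gamma_e \<eta> Ce lam xe i j x y =
     exp (- \<eta> * Ce i j x y - lam i j x - lam j i y - xe i j)"

definition Gamma_v ::
  "(nat \<times> nat) set \<Rightarrow> real \<Rightarrow> (nat \<Rightarrow> nat \<Rightarrow> real) \<Rightarrow> (nat \<Rightarrow> nat \<Rightarrow> nat \<Rightarrow> real)
   \<Rightarrow> (nat \<Rightarrow> real) \<Rightarrow> nat \<Rightarrow> nat \<Rightarrow> real" where
  "Gamma_v E \<eta> Cv lam xv i x =
     exp (- \<eta> * Cv i x - xv i + (\<Sum>j\<in>nbrs E i. lam i j x))"

definition Lyap ::
  "nat \<Rightarrow> (nat \<times> nat) set \<Rightarrow> nat \<Rightarrow> real
   \<Rightarrow> (nat \<Rightarrow> nat \<Rightarrow> nat \<Rightarrow> nat \<Rightarrow> real) \<Rightarrow> (nat \<Rightarrow> nat \<Rightarrow> real)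
   \<Rightarrow> (nat \<Rightarrow> nat \<Rightarrow> nat \<Rightarrow> real) \<Rightarrow> (nat \<Rightarrow> nat \<Rightarrow> real) \<Rightarrow> (nat \<Rightarrow> real) \<Rightarrow> real" where
  "Lyap n E d \<eta> Ce Cv lam xe xv =
     - (\<Sum>(i, j)\<in>E. \<Sum>x<d. \<Sum>y<d. Gamma_e \<eta> Ce lam xe i j x y)
     - (\<Sum>i\<in>{1..n}. \<Sum>x<d. Gamma_v E \<eta> Cv lam xv i x)
     - (\<Sum>(i, j)\<in>E. xe i j)
     - (\<Sum>i\<in>{1..n}. xv i)
     + (\<Sum>(i, j)\<in>E. \<Sum>x<d. \<Sum>y<d. exp (- \<eta> * Ce i j x y))
     + (\<Sum>i\<in>{1..n}. \<Sum>x<d. exp (- \<eta> * Cv i x))"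

definition norm1_term ::
  "nat \<Rightarrow> (nat \<times> nat) set \<Rightarrow> nat \<Rightarrow> real
   \<Rightarrow> (nat \<Rightarrow> nat \<Rightarrow> nat \<Rightarrow> nat \<Rightarrow> real) \<Rightarrow> (nat \<Rightarrow> nat \<Rightarrow> real) \<Rightarrow> real" where
  "norm1_term n E d \<eta> Ce Cv =
     (\<Sum>(i, j)\<in>E. \<Sum>x<d. \<Sum>y<d. \<bar>\<eta> * Ce i j x y / real d + exp (- \<eta> * Ce i j x y)\<bar>)
     + (\<Sum>i\<in>{1..n}. \<Sum>x<d. \<bar>\<eta> * Cv i x / real d + exp (- \<eta> * Cv i x)\<bar>)"

definition S_term ::
  "nat \<Rightarrow> (nat \<times> nat) set \<Rightarrow> nat \<Rightarrow> real
   \<Rightarrow> (nat \<Rightarrow> nat \<Rightarrow> nat \<Rightarrow> nat \<Rightarrow> real) \<Rightarrow> (nat \<Rightarrow> nat \<Rightarrow> real) \<Rightarrow> real" where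
  "S_term n E d \<eta> Ce Cv =
     (\<Sum>(i, j)\<in>E. ln (\<Sum>x<d. \<Sum>y<d. exp (- \<eta> * Ce i j x y))
                   + (\<Sum>x<d. \<Sum>y<d. \<eta> / (real d)^2 * Ce i j x y))
     + (\<Sum>i\<in>{1..n}. ln (\<Sum>x<d. exp (- \<eta> * Cv i x))
                   + (\<Sum>x<d. \<eta> / real d * Cv i x))"

end

theory Submission imports Defs begin

(* The bound holds with any (lambda, xi) in place of the maximizer. Summing the tangent
   inequality exp u \<ge> (1 + u + ln k) / k over the k states of a factor (k = d^2 for an
   edge, k = d for a vertex) bounds each Gamma-sum from below by 1 + ln k plus the mean
   exponent. In the resulting upper bound for L the xi cancel, and lambda_ij enters the
   mean over edge ij and the mean at vertex i with opposite signs, so it cancels too.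
   At (lambda^(1), xi^(1)) every Gamma-sum is 1, so what remains is, per factor,
   ln Z - ln k + mean (eta C) with Z = sum exp (-eta C): this is at most S because
   ln k \<ge> 0, and at most the l1-norm because ln (Z / k) \<le> Z / k - 1. *)

lemma one_plus_ln_card_plus_mean_le_sum_exp:
  fixes f :: "'a \<Rightarrow> real"
  assumes "finite A" "A \<noteq> {}"
  shows "1 + ln (card A) + (\<Sum>a\<in>A. f a) / card A \<le> (\<Sum>a\<in>A. exp (f a))"
proof -
  define k where "k = real (card A)"
  have "k > 0" using assms by (simp add: k_def card_gt_0_iff)
  have tangent: "(1 + f a + ln k) / k \<le> exp (f a)" for a
  proof -
    have "1 + (f a + ln k) \<le> exp (f a + ln k)" by (rule exp_ge_add_one_self)
    also have "\<dots> = exp (f a) * k" using \<open>k > 0\<close> by (simp add: exp_add)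
    finally show ?thesis using \<open>k > 0\<close> by (simp add: divide_le_eq algebra_simps)
  qed
  have "1 + ln k + (\<Sum>a\<in>A. f a) / k = (\<Sum>a\<in>A. (1 + f a + ln k) / k)"
    using \<open>k > 0\<close> by (simp add: sum_divide_distrib[symmetric] sum.distrib k_def field_simps)
  also have "\<dots> \<le> (\<Sum>a\<in>A. exp (f a))" by (intro sum_mono tangent)
  finally show ?thesis by (simp add: k_def)
qed

lemma exp_neg_add_div_le_abs:
  fixes c D K :: real
  assumes "1 \<le> D" "D \<le> K"
  shows "(exp (- c) + c) / K \<le> \<bar>c / D + exp (- c)\<bar>"
proof (cases "c \<ge> 0")
  case True
  have "exp (- c) / K \<le> exp (- c)" using assms by (simp add: divide_le_eq)
  moreover have "c / K \<le> c / D" using assms True by (simp add: frac_le)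
  ultimately show ?thesis by (simp add: add_divide_distrib)
next
  case False
  have "- c \<le> exp (- c)" using exp_ge_add_one_self[of "- c"] by linarith
  then have "(- c) * (1 / D - 1 / K) \<le> exp (- c) * (1 - 1 / K)"
    using assms False by (intro mult_mono) (auto simp: divide_le_eq field_simps)
  then have "(exp (- c) + c) / K \<le> c / D + exp (- c)"
    by (simp add: field_simps add_divide_distrib)
  then show ?thesis by linarith
qed

lemma ln_sum_exp_neg_minus_ln_card_plus_mean_le:
  fixes c :: "'a \<Rightarrow> real"
  assumes "finite A" "A \<noteq> {}" "1 \<le> D" "D \<le> card A"
  shows "ln (\<Sum>a\<in>A. exp (- c a)) - ln (card A) + (\<Sum>a\<in>A. c a) / card A
           \<le> (\<Sum>a\<in>A. \<bar>c a / D + exp (- c a)\<bar>)"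
proof -
  define k where "k = real (card A)"
  define Z where "Z = (\<Sum>a\<in>A. exp (- c a))"
  have "k > 0" using assms by (simp add: k_def card_gt_0_iff)
  have "Z > 0" unfolding Z_def using assms by (intro sum_pos) auto
  have "ln Z - ln k = ln (Z / k)" using \<open>k > 0\<close> \<open>Z > 0\<close> by (simp add: ln_div)
  also have "\<dots> \<le> Z / k - 1" using \<open>k > 0\<close> \<open>Z > 0\<close> by (intro ln_le_minus_one) simp
  finally have "ln Z - ln k \<le> Z / k" by simp
  moreover have "Z / k + (\<Sum>a\<in>A. c a) / k = (\<Sum>a\<in>A. (exp (- c a) + c a) / k)"
    by (simp add: Z_def sum_divide_distrib sum.distrib add_divide_distrib)
  moreover have "\<dots> \<le> (\<Sum>a\<in>A. \<bar>c a / D + exp (- c a)\<bar>)"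
    using assms by (intro sum_mono exp_neg_add_div_le_abs) (simp_all add: k_def)
  ultimately show ?thesis by (simp add: Z_def k_def)
qed

lemma sum_nbrs_eq_sum_edges:
  fixes g :: "nat \<Rightarrow> nat \<Rightarrow> 'b :: comm_monoid_add"
  assumes "finite V" "E \<subseteq> V \<times> V" "\<And>i j. (i, j) \<in> E \<Longrightarrow> (j, i) \<notin> E"
  shows "(\<Sum>i\<in>V. \<Sum>j\<in>nbrs E i. g i j) = (\<Sum>(i, j)\<in>E. g i j + g j i)"
proof -
  have "finite E" using assms finite_subset by blast
  have nbrs_sub: "nbrs E i \<subseteq> V" for i using assms by (auto simp: nbrs_def)
  have "(\<Sum>i\<in>V. \<Sum>j\<in>nbrs E i. g i j) = (\<Sum>(i, j)\<in>Sigma V (nbrs E). g i j)"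
    using assms by (intro sum.Sigma) (auto intro: finite_subset[OF nbrs_sub])
  also have "Sigma V (nbrs E) = E \<union> prod.swap ` E"
    using assms by (auto simp: nbrs_def image_iff) (metis swap_simp)
  also have "(\<Sum>(i, j)\<in>E \<union> prod.swap ` E. g i j)
      = (\<Sum>(i, j)\<in>E. g i j) + (\<Sum>(i, j)\<in>prod.swap ` E. g i j)"
    using \<open>finite E\<close> assms by (intro sum.union_disjoint) auto
  also have "(\<Sum>(i, j)\<in>prod.swap ` E. g i j) = (\<Sum>(i, j)\<in>E. g j i)"
    by (subst sum.reindex) (auto simp: split_def)
  finally show ?thesis by (simp add: split_def sum.distrib)
qed

definition edge_dual_term ::
  "nat \<Rightarrow> real \<Rightarrow> (nat \<Rightarrow> nat \<Rightarrow> nat \<Rightarrow> nat \<Rightarrow> real) \<Rightarrow> (nat \<Rightarrow> nat \<Rightarrow> nat \<Rightarrow> real)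
   \<Rightarrow> (nat \<Rightarrow> nat \<Rightarrow> real) \<Rightarrow> nat \<Rightarrow> nat \<Rightarrow> real" where
  "edge_dual_term d \<eta> Ce lam xe i j = (\<Sum>x<d. \<Sum>y<d. Gamma_e \<eta> Ce lam xe i j x y) + xe i j"

definition vertex_dual_term ::
  "(nat \<times> nat) set \<Rightarrow> nat \<Rightarrow> real \<Rightarrow> (nat \<Rightarrow> nat \<Rightarrow> real) \<Rightarrow> (nat \<Rightarrow> nat \<Rightarrow> nat \<Rightarrow> real)
   \<Rightarrow> (nat \<Rightarrow> real) \<Rightarrow> nat \<Rightarrow> real" where
  "vertex_dual_term E d \<eta> Cv lam xv i = (\<Sum>x<d. Gamma_v E \<eta> Cv lam xv i x) + xv i"

lemma Lyap_diff_eq: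
  "Lyap n E d \<eta> Ce Cv lam xe xv - Lyap n E d \<eta> Ce Cv lam' xe' xv'
     = (\<Sum>(i, j)\<in>E. edge_dual_term d \<eta> Ce lam' xe' i j - edge_dual_term d \<eta> Ce lam xe i j)
     + (\<Sum>i\<in>{1..n}. vertex_dual_term E d \<eta> Cv lam' xv' i - vertex_dual_term E d \<eta> Cv lam xv i)"
  by (simp add: Lyap_def edge_dual_term_def vertex_dual_term_def split_def
      sum.distrib sum_subtractf)

lemma edge_dual_term_ge:
  assumes "d > 0"
  shows "1 + 2 * ln d - (\<Sum>x<d. \<Sum>y<d. \<eta> / (real d)^2 * Ce i j x y)
           - (\<Sum>x<d. lam i j x) / d - (\<Sum>x<d. lam j i x) / d
         \<le> edge_dual_term d \<eta> Ce lam xe i j"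
proof -
  let ?A = "{..<d} \<times> {..<d}"
  let ?f = "\<lambda>(x, y). - \<eta> * Ce i j x y - lam i j x - lam j i y - xe i j"
  have card: "real (card ?A) = real d * real d" by simp
  have "(\<Sum>a\<in>?A. ?f a) = - (\<Sum>x<d. \<Sum>y<d. \<eta> * Ce i j x y)
      - d * (\<Sum>x<d. lam i j x) - d * (\<Sum>x<d. lam j i x) - d * d * xe i j"
    by (simp add: sum.cartesian_product[symmetric] sum_subtractf sum_negf sum_distrib_left
        sum.swap[of "\<lambda>x y. lam j i y"])
  then have "(\<Sum>a\<in>?A. ?f a) / card ?A = - (\<Sum>x<d. \<Sum>y<d. \<eta> / (real d)^2 * Ce i j x y)
      - (\<Sum>x<d. lam i j x) / d - (\<Sum>x<d. lam j i x) / d - xe i j"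
    using assms unfolding card
    by (simp add: sum_divide_distrib power2_eq_square diff_divide_distrib)
  moreover have "ln (card ?A) = 2 * ln d" using assms by (simp add: ln_mult)
  moreover have "(\<Sum>a\<in>?A. exp (?f a)) = (\<Sum>x<d. \<Sum>y<d. Gamma_e \<eta> Ce lam xe i j x y)"
    by (simp add: sum.cartesian_product Gamma_e_def split_def)
  moreover have "1 + ln (card ?A) + (\<Sum>a\<in>?A. ?f a) / card ?A \<le> (\<Sum>a\<in>?A. exp (?f a))"
    using assms by (intro one_plus_ln_card_plus_mean_le_sum_exp) auto
  ultimately show ?thesis by (simp add: edge_dual_term_def)
qed

lemma vertex_dual_term_ge:
  assumes "d > 0"
  shows "1 + ln d - (\<Sum>x<d. \<eta> / real d * Cv i x) + (\<Sum>j\<in>nbrs E i. \<Sum>x<d. lam i j x) / d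
         \<le> vertex_dual_term E d \<eta> Cv lam xv i"
proof -
  let ?f = "\<lambda>x. - \<eta> * Cv i x + (\<Sum>j\<in>nbrs E i. lam i j x) - xv i"
  have "(\<Sum>x<d. ?f x) = - (\<Sum>x<d. \<eta> * Cv i x) + (\<Sum>j\<in>nbrs E i. \<Sum>x<d. lam i j x) - d * xv i"
    by (simp add: sum.distrib sum_subtractf sum_negf sum.swap[of _ "nbrs E i"])
  then have "(\<Sum>x<d. ?f x) / d = - (\<Sum>x<d. \<eta> / real d * Cv i x)
      + (\<Sum>j\<in>nbrs E i. \<Sum>x<d. lam i j x) / d - xv i"
    using assms by (simp add: sum_divide_distrib add_divide_distrib diff_divide_distrib)
  moreover have "(\<Sum>x<d. exp (?f x)) = (\<Sum>x<d. Gamma_v E \<eta> Cv lam xv i x)"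
    by (simp add: Gamma_v_def algebra_simps)
  moreover have "1 + ln (card {..<d}) + (\<Sum>x<d. ?f x) / card {..<d} \<le> (\<Sum>x<d. exp (?f x))"
    using assms by (intro one_plus_ln_card_plus_mean_le_sum_exp) auto
  ultimately show ?thesis by (simp add: vertex_dual_term_def)
qed

lemma edge_dual_term_initial:
  assumes "d > 0"
  shows "edge_dual_term d \<eta> Ce (\<lambda>i j x. 0) (\<lambda>i j. ln (\<Sum>x<d. \<Sum>y<d. exp (- \<eta> * Ce i j x y))) i j
           = 1 + ln (\<Sum>x<d. \<Sum>y<d. exp (- \<eta> * Ce i j x y))"
proof -
  define Z where "Z = (\<Sum>x<d. \<Sum>y<d. exp (- \<eta> * Ce i j x y))"
  have "Z > 0" unfolding Z_def using assms by (intro sum_pos) auto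
  then have "(\<Sum>x<d. \<Sum>y<d. exp (- \<eta> * Ce i j x y) / Z) = 1"
    by (simp add: Z_def sum_divide_distrib[symmetric])
  with \<open>Z > 0\<close> show ?thesis
    unfolding edge_dual_term_def Gamma_e_def Z_def[symmetric] by (simp add: exp_diff)
qed

lemma vertex_dual_term_initial:
  assumes "d > 0"
  shows "vertex_dual_term E d \<eta> Cv (\<lambda>i j x. 0) (\<lambda>i. ln (\<Sum>x<d. exp (- \<eta> * Cv i x))) i
           = 1 + ln (\<Sum>x<d. exp (- \<eta> * Cv i x))"
proof -
  define Z where "Z = (\<Sum>x<d. exp (- \<eta> * Cv i x))"
  have "Z > 0" unfolding Z_def using assms by (intro sum_pos) auto
  then have "(\<Sum>x<d. exp (- \<eta> * Cv i x) / Z) = 1"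
    by (simp add: Z_def sum_divide_distrib[symmetric])
  with \<open>Z > 0\<close> show ?thesis
    unfolding vertex_dual_term_def Gamma_v_def Z_def[symmetric] by (simp add: exp_diff)
qed

definition edge_gap :: "nat \<Rightarrow> real \<Rightarrow> (nat \<Rightarrow> nat \<Rightarrow> nat \<Rightarrow> nat \<Rightarrow> real) \<Rightarrow> nat \<Rightarrow> nat \<Rightarrow> real" where
  "edge_gap d \<eta> Ce i j = ln (\<Sum>x<d. \<Sum>y<d. exp (- \<eta> * Ce i j x y)) - 2 * ln d
     + (\<Sum>x<d. \<Sum>y<d. \<eta> / (real d)^2 * Ce i j x y)"

definition vertex_gap :: "nat \<Rightarrow> real \<Rightarrow> (nat \<Rightarrow> nat \<Rightarrow> real) \<Rightarrow> nat \<Rightarrow> real" where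
  "vertex_gap d \<eta> Cv i = ln (\<Sum>x<d. exp (- \<eta> * Cv i x)) - ln d + (\<Sum>x<d. \<eta> / real d * Cv i x)"

lemma Lyap_minus_initial_le_gaps:
  assumes E_sub: "E \<subseteq> {1..n} \<times> {1..n}"
    and no_dup: "\<And>i j. (i, j) \<in> E \<Longrightarrow> (j, i) \<notin> E"
    and "d > 0"
  shows "Lyap n E d \<eta> Ce Cv lam xe xv
           - Lyap n E d \<eta> Ce Cv (\<lambda>i j x. 0)
               (\<lambda>i j. ln (\<Sum>x<d. \<Sum>y<d. exp (- \<eta> * Ce i j x y)))
               (\<lambda>i. ln (\<Sum>x<d. exp (- \<eta> * Cv i x)))
         \<le> (\<Sum>(i, j)\<in>E. edge_gap d \<eta> Ce i j) + (\<Sum>i\<in>{1..n}. vertex_gap d \<eta> Cv i)"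
    (is "?L - ?L1 \<le> _")
proof -
  define La where "La i j = (\<Sum>x<d. lam i j x) / d" for i j
  have "?L - ?L1
      = (\<Sum>(i, j)\<in>E. 1 + ln (\<Sum>x<d. \<Sum>y<d. exp (- \<eta> * Ce i j x y))
                       - edge_dual_term d \<eta> Ce lam xe i j)
      + (\<Sum>i\<in>{1..n}. 1 + ln (\<Sum>x<d. exp (- \<eta> * Cv i x)) - vertex_dual_term E d \<eta> Cv lam xv i)"
    unfolding Lyap_diff_eq edge_dual_term_initial[OF \<open>d > 0\<close>]
      vertex_dual_term_initial[OF \<open>d > 0\<close>] ..
  also have "\<dots> \<le> (\<Sum>(i, j)\<in>E. edge_gap d \<eta> Ce i j + (La i j + La j i))
      + (\<Sum>i\<in>{1..n}. vertex_gap d \<eta> Cv i - (\<Sum>j\<in>nbrs E i. La i j))"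
  proof (rule add_mono)
    have "1 + ln (\<Sum>x<d. \<Sum>y<d. exp (- \<eta> * Ce i j x y)) - edge_dual_term d \<eta> Ce lam xe i j
        \<le> edge_gap d \<eta> Ce i j + (La i j + La j i)" for i j
      using edge_dual_term_ge[OF \<open>d > 0\<close>, of \<eta> Ce i j lam xe]
      by (simp add: edge_gap_def La_def)
    then show "(\<Sum>(i, j)\<in>E. 1 + ln (\<Sum>x<d. \<Sum>y<d. exp (- \<eta> * Ce i j x y))
                       - edge_dual_term d \<eta> Ce lam xe i j)
        \<le> (\<Sum>(i, j)\<in>E. edge_gap d \<eta> Ce i j + (La i j + La j i))"
      by (intro sum_mono) (simp add: split_def)
    have "1 + ln (\<Sum>x<d. exp (- \<eta> * Cv i x)) - vertex_dual_term E d \<eta> Cv lam xv i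
        \<le> vertex_gap d \<eta> Cv i - (\<Sum>j\<in>nbrs E i. La i j)" for i
      using vertex_dual_term_ge[OF \<open>d > 0\<close>,
          where \<eta> = \<eta> and Cv = Cv and i = i and E = E and lam = lam and xv = xv]
      by (simp add: vertex_gap_def La_def sum_divide_distrib)
    then show "(\<Sum>i\<in>{1..n}. 1 + ln (\<Sum>x<d. exp (- \<eta> * Cv i x))
                              - vertex_dual_term E d \<eta> Cv lam xv i)
        \<le> (\<Sum>i\<in>{1..n}. vertex_gap d \<eta> Cv i - (\<Sum>j\<in>nbrs E i. La i j))"
      by (intro sum_mono)
  qed
  also have "\<dots> = (\<Sum>(i, j)\<in>E. edge_gap d \<eta> Ce i j) + (\<Sum>i\<in>{1..n}. vertex_gap d \<eta> Cv i)"
    using sum_nbrs_eq_sum_edges[OF _ E_sub no_dup, of La]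
    by (simp add: split_def sum.distrib sum_subtractf)
  finally show ?thesis .
qed

lemma edge_gap_le_abs_sum:
  assumes "d > 0"
  shows "edge_gap d \<eta> Ce i j
           \<le> (\<Sum>x<d. \<Sum>y<d. \<bar>\<eta> * Ce i j x y / real d + exp (- \<eta> * Ce i j x y)\<bar>)"
proof -
  let ?A = "{..<d} \<times> {..<d}"
  let ?c = "\<lambda>(x, y). \<eta> * Ce i j x y"
  have "ln (\<Sum>a\<in>?A. exp (- ?c a)) - ln (card ?A) + (\<Sum>a\<in>?A. ?c a) / card ?A
      \<le> (\<Sum>a\<in>?A. \<bar>?c a / d + exp (- ?c a)\<bar>)"
    using assms by (intro ln_sum_exp_neg_minus_ln_card_plus_mean_le) auto
  moreover have "ln (card ?A) = 2 * ln d" using assms by (simp add: ln_mult)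
  moreover have "(\<Sum>a\<in>?A. ?c a) / card ?A = (\<Sum>x<d. \<Sum>y<d. \<eta> / (real d)^2 * Ce i j x y)"
    by (simp add: sum.cartesian_product[symmetric] sum_divide_distrib power2_eq_square)
  ultimately show ?thesis
    by (simp add: edge_gap_def sum.cartesian_product split_def)
qed

lemma vertex_gap_le_abs_sum:
  assumes "d > 0"
  shows "vertex_gap d \<eta> Cv i \<le> (\<Sum>x<d. \<bar>\<eta> * Cv i x / real d + exp (- \<eta> * Cv i x)\<bar>)"
proof -
  have "ln (\<Sum>x<d. exp (- (\<eta> * Cv i x))) - ln (card {..<d}) + (\<Sum>x<d. \<eta> * Cv i x) / card {..<d}
      \<le> (\<Sum>x<d. \<bar>\<eta> * Cv i x / d + exp (- (\<eta> * Cv i x))\<bar>)"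
    using assms by (intro ln_sum_exp_neg_minus_ln_card_plus_mean_le) auto
  then show ?thesis by (simp add: vertex_gap_def sum_divide_distrib)
qed

lemma sum_gaps_le_min_norm1_S:
  assumes "d > 0"
  shows "(\<Sum>(i, j)\<in>E. edge_gap d \<eta> Ce i j) + (\<Sum>i\<in>{1..n}. vertex_gap d \<eta> Cv i)
         \<le> min (norm1_term n E d \<eta> Ce Cv) (S_term n E d \<eta> Ce Cv)"
proof -
  have "0 \<le> ln (real d)" using assms by simp
  then have "(\<Sum>(i, j)\<in>E. edge_gap d \<eta> Ce i j) + (\<Sum>i\<in>{1..n}. vertex_gap d \<eta> Cv i)
      \<le> S_term n E d \<eta> Ce Cv"
    unfolding S_term_def
    by (intro add_mono sum_mono) (auto simp: edge_gap_def vertex_gap_def split_def)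
  moreover have "(\<Sum>(i, j)\<in>E. edge_gap d \<eta> Ce i j) + (\<Sum>i\<in>{1..n}. vertex_gap d \<eta> Cv i)
      \<le> norm1_term n E d \<eta> Ce Cv"
    unfolding norm1_term_def using edge_gap_le_abs_sum[OF assms] vertex_gap_le_abs_sum[OF assms]
    by (intro add_mono sum_mono) (auto simp: split_def)
  ultimately show ?thesis by simp
qed

theorem lemma2:
  fixes n d :: nat and E :: "(nat \<times> nat) set" and \<eta> :: real
    and Ce :: "nat \<Rightarrow> nat \<Rightarrow> nat \<Rightarrow> nat \<Rightarrow> real" and Cv :: "nat \<Rightarrow> nat \<Rightarrow> real"
    and lam_s :: "nat \<Rightarrow> nat \<Rightarrow> nat \<Rightarrow> real" and xe_s :: "nat \<Rightarrow> nat \<Rightarrow> real"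
    and xv_s :: "nat \<Rightarrow> real"
  assumes E_sub: "E \<subseteq> {1..n} \<times> {1..n}"
    and no_loop: "\<And>i j. (i, j) \<in> E \<Longrightarrow> i \<noteq> j"
    and no_dup: "\<And>i j. (i, j) \<in> E \<Longrightarrow> (j, i) \<notin> E"
    and covered: "\<And>i. i \<in> {1..n} \<Longrightarrow> \<exists>j. (i, j) \<in> E \<or> (j, i) \<in> E"
    and d_pos: "d > 0"
    and eta_pos: "\<eta> > 0"
    and maximizer: "\<And>lam xe xv. Lyap n E d \<eta> Ce Cv lam xe xv \<le> Lyap n E d \<eta> Ce Cv lam_s xe_s xv_s"
  shows "Lyap n E d \<eta> Ce Cv lam_s xe_s xv_s
           - Lyap n E d \<eta> Ce Cv (\<lambda>i j x. 0)
               (\<lambda>i j. ln (\<Sum>x<d. \<Sum>y<d. exp (- \<eta> * Ce i j x y)))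
               (\<lambda>i. ln (\<Sum>x<d. exp (- \<eta> * Cv i x)))
         \<le> min (norm1_term n E d \<eta> Ce Cv) (S_term n E d \<eta> Ce Cv)"
  using Lyap_minus_initial_le_gaps[OF E_sub no_dup d_pos] sum_gaps_le_min_norm1_S[OF d_pos]
  by (rule order.trans)

end
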